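(* Let $u=[u_i]_{i\in[n]}$ ($n\in\{1,2,\dots\}\cup\{\infty\}$) be an invertible row operator on $\mathcal H$ with inverse $v=[v_i]_{i\in[n]}^t$, and let $\alpha$ be the endomorphism of $B(\mathcal H)$ given by $\alpha(x)=\sum_{i\in[n]}u_ixv_i$. Then for any $x,y\in B(\mathcal H)$: $\alpha(x)y=y\alpha(x)$ if and only if $x\,v_jyu_k=v_jyu_k\,x$ for all $j,k\in[n]$.
   Context: A row $u=[u_i]_{i\in[n]}\in B(\mathcal H\otimes\ell^2(n),\mathcal H)$ is invertible with inverse the column $v=[v_i]^t\in B(\mathcal H,\mathcal H\otimes\ell^2(n))$ if $vu=I_{\mathcal H\otimes\ell^2(n)}$ (equivalently $v_iu_j=\delta_{ij}I$) and $\sum_iu_iv_i=I_{\mathcal H}$ (strong operator topology). *)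

theory Defs
  imports "HOL-Analysis.Analysis"
begin

text \<open>A complex Hilbert space is modelled as a real Hilbert space ('a :: {real_inner, complete_space})
  together with a complex structure J (multiplication by i): an isometric real-linear operator with
  J o J = -I.  The complex bounded operators B(H) are then exactly the bounded real-linear operators
  commuting with J.\<close>

definition complex_structure :: "('a::real_normed_vector \<Rightarrow>\<^sub>L 'a) \<Rightarrow> bool" where
  "complex_structure J \<longleftrightarrow> J o\<^sub>L J = - id_blinfun \<and> (\<forall>h. norm (blinfun_apply J h) = norm h)"

definition is_BH :: "('a::real_normed_vector \<Rightarrow>\<^sub>L 'a) \<Rightarrow> ('a \<Rightarrow>\<^sub>L 'a) \<Rightarrow> bool" where
  "is_BH J T \<longleftrightarrow> T o\<^sub>L J = J o\<^sub>L T"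

definition idx :: "enat \<Rightarrow> nat set" where
  "idx n = {i. enat i < n}"

text \<open>Bounded row u = [u_i] : H \<otimes> l^2(I) \<rightarrow> H.\<close>
definition bounded_row :: "nat set \<Rightarrow> (nat \<Rightarrow> ('a::real_inner \<Rightarrow>\<^sub>L 'a)) \<Rightarrow> bool" where
  "bounded_row I u \<longleftrightarrow> (\<exists>C. \<forall>F \<xi>. finite F \<longrightarrow> F \<subseteq> I \<longrightarrow>
      norm (\<Sum>i\<in>F. blinfun_apply (u i) (\<xi> i)) \<le> C * sqrt (\<Sum>i\<in>F. (norm (\<xi> i))\<^sup>2))"

text \<open>Bounded column v = [v_i]^t : H \<rightarrow> H \<otimes> l^2(I).\<close>
definition bounded_column :: "nat set \<Rightarrow> (nat \<Rightarrow> ('a::real_inner \<Rightarrow>\<^sub>L 'a)) \<Rightarrow> bool" where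
  "bounded_column I v \<longleftrightarrow> (\<exists>C. \<forall>F h. finite F \<longrightarrow> F \<subseteq> I \<longrightarrow>
      (\<Sum>i\<in>F. (norm (blinfun_apply (v i) h))\<^sup>2) \<le> C * (norm h)\<^sup>2)"

definition invertible_row :: "nat set \<Rightarrow> (nat \<Rightarrow> ('a::{real_inner,complete_space} \<Rightarrow>\<^sub>L 'a))
    \<Rightarrow> (nat \<Rightarrow> ('a \<Rightarrow>\<^sub>L 'a)) \<Rightarrow> bool" where
  "invertible_row I u v \<longleftrightarrow> bounded_row I u \<and> bounded_column I v \<and>
     (\<forall>i\<in>I. \<forall>j\<in>I. v i o\<^sub>L u j = (if i = j then id_blinfun else 0)) \<and>
     (\<forall>h. ((\<lambda>i. blinfun_apply (u i) (blinfun_apply (v i) h)) has_sum h) I)"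

definition alpha :: "nat set \<Rightarrow> (nat \<Rightarrow> ('a::{real_inner,complete_space} \<Rightarrow>\<^sub>L 'a))
    \<Rightarrow> (nat \<Rightarrow> ('a \<Rightarrow>\<^sub>L 'a)) \<Rightarrow> ('a \<Rightarrow>\<^sub>L 'a) \<Rightarrow> ('a \<Rightarrow>\<^sub>L 'a)" where
  "alpha I u v x = Blinfun (\<lambda>h. infsum (\<lambda>i. blinfun_apply (u i) (blinfun_apply x (blinfun_apply (v i) h))) I)"

end

theory Submission
  imports Defs
begin

text \<open>Since \<open>v\<^sub>j u\<^sub>k = \<delta>\<^sub>j\<^sub>k\<close>, the endomorphism \<open>\<alpha>\<close> intertwines \<open>x\<close> with itself along the row and
  the column: \<open>\<alpha>(x) u\<^sub>k = u\<^sub>k x\<close> and \<open>v\<^sub>j \<alpha>(x) = x v\<^sub>j\<close>. If \<open>\<alpha>(x)\<close> commutes with \<open>y\<close>, then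
  \<open>x v\<^sub>j y u\<^sub>k = v\<^sub>j \<alpha>(x) y u\<^sub>k = v\<^sub>j y \<alpha>(x) u\<^sub>k = v\<^sub>j y u\<^sub>k x\<close>. Conversely, inserting
  \<open>\<Sum>\<^sub>k u\<^sub>k v\<^sub>k = I\<close> gives \<open>v\<^sub>j \<alpha>(x) y = x v\<^sub>j y = \<Sum>\<^sub>k x v\<^sub>j y u\<^sub>k v\<^sub>k = \<Sum>\<^sub>k v\<^sub>j y u\<^sub>k x v\<^sub>k = v\<^sub>j y \<alpha>(x)\<close>,
  and an operator is determined by its compressions \<open>v\<^sub>j\<close>, again because \<open>\<Sum>\<^sub>k u\<^sub>k v\<^sub>k = I\<close>.
  The series defining \<open>\<alpha>(x) h\<close> converges because the vectors \<open>x v\<^sub>i h\<close> are square-summable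
  (\<open>v\<close> is a bounded column) and a bounded row maps square-summable families to summable ones.\<close>

lemma summable_on_if_tails_small:
  fixes f :: "'i \<Rightarrow> 'a::{real_normed_vector,complete_space}"
  assumes tails: "\<And>e. e > 0 \<Longrightarrow>
    \<exists>F0. finite F0 \<and> F0 \<subseteq> I \<and> (\<forall>G. finite G \<longrightarrow> G \<subseteq> I - F0 \<longrightarrow> norm (sum f G) < e)"
  shows "f summable_on I"
proof -
  have "\<exists>P. eventually P (finite_subsets_at_top I) \<and>
      (\<forall>F F'. P F \<and> P F' \<longrightarrow> dist (sum f F) (sum f F') < e)" if e: "e > 0" for e
  proof -
    obtain F0 where F0: "finite F0" "F0 \<subseteq> I"
      and small: "\<And>G. finite G \<Longrightarrow> G \<subseteq> I - F0 \<Longrightarrow> norm (sum f G) < e/2"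
      using tails[of "e/2"] e by auto
    define P where "P F \<longleftrightarrow> finite F \<and> F \<subseteq> I \<and> F0 \<subseteq> F" for F
    have "eventually P (finite_subsets_at_top I)"
      unfolding eventually_finite_subsets_at_top P_def using F0 by blast
    moreover have "dist (sum f F) (sum f F') < e" if "P F" "P F'" for F F'
    proof -
      have F: "finite F" "finite F'" "F - F' \<subseteq> I - F0" "F' - F \<subseteq> I - F0"
        using that by (auto simp: P_def)
      have "sum f F - sum f F' = sum f (F - F') - sum f (F' - F)"
        using sum.Int_Diff[OF F(1), of f F'] sum.Int_Diff[OF F(2), of f F]
        by (simp add: Int_commute)
      then have "dist (sum f F) (sum f F') \<le> norm (sum f (F - F')) + norm (sum f (F' - F))"
        by (simp add: dist_norm norm_triangle_ineq4)
      also have "\<dots> < e/2 + e/2"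
        using F by (intro add_strict_mono small) auto
      finally show ?thesis by simp
    qed
    ultimately show ?thesis by blast
  qed
  then have "cauchy_filter (filtermap (sum f) (finite_subsets_at_top I))"
    by (simp add: cauchy_filter_metric_filtermap)
  moreover have "complete (UNIV :: 'a set)"
    by (meson Cauchy_convergent UNIV_I complete_def convergent_def)
  ultimately obtain S where "(sum f \<longlongrightarrow> S) (finite_subsets_at_top I)"
    using complete_uniform[where S=UNIV] by (force simp add: filterlim_def)
  then show ?thesis
    unfolding summable_on_def has_sum_def by blast
qed

lemma nonneg_summable_on_tails_small:
  fixes g :: "'i \<Rightarrow> real"
  assumes "g summable_on I" and nonneg: "\<And>i. i \<in> I \<Longrightarrow> g i \<ge> 0" and "d > 0"
  obtains F0 where "finite F0" "F0 \<subseteq> I" "\<And>G. finite G \<Longrightarrow> G \<subseteq> I - F0 \<Longrightarrow> sum g G < d"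
proof -
  have g: "(g has_sum infsum g I) I"
    using assms(1) by (rule has_sum_infsum)
  obtain F0 where F0: "finite F0" "F0 \<subseteq> I" "dist (sum g F0) (infsum g I) \<le> d/2"
    using has_sum_finite_approximation[OF g, of "d/2"] \<open>d > 0\<close> by auto
  have "sum g G < d" if G: "finite G" "G \<subseteq> I - F0" for G
  proof -
    have "sum g F0 + sum g G = sum g (F0 \<union> G)"
      using F0 G by (subst sum.union_disjoint) auto
    also have "\<dots> \<le> infsum g I"
      by (rule finite_sum_le_has_sum[OF g]) (use F0 G nonneg in auto)
    finally show ?thesis
      using F0(3) \<open>d > 0\<close> unfolding dist_real_def abs_le_iff by linarith
  qed
  with F0(1,2) show ?thesis by (rule that)
qed

lemma norm_has_sum_le_finite_sums:
  fixes f :: "'i \<Rightarrow> 'a::real_normed_vector"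
  assumes "(f has_sum S) I" and "\<And>F. finite F \<Longrightarrow> F \<subseteq> I \<Longrightarrow> norm (sum f F) \<le> b"
  shows "norm S \<le> b"
  by (rule tendsto_upperbound[OF tendsto_norm[OF assms(1)[unfolded has_sum_def]]])
     (use assms(2) in \<open>auto intro: eventually_finite_subsets_at_top_weakI\<close>)

lemma bounded_row_nonneg_bound:
  fixes u :: "nat \<Rightarrow> ('a::real_inner \<Rightarrow>\<^sub>L 'a)"
  assumes "bounded_row I u"
  obtains C where "C \<ge> 0"
    and "\<And>F (\<xi> :: nat \<Rightarrow> 'a). finite F \<Longrightarrow> F \<subseteq> I \<Longrightarrow>
      norm (\<Sum>i\<in>F. blinfun_apply (u i) (\<xi> i)) \<le> C * sqrt (\<Sum>i\<in>F. (norm (\<xi> i))\<^sup>2)"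
proof -
  obtain C where C: "\<And>F (\<xi> :: nat \<Rightarrow> 'a). finite F \<Longrightarrow> F \<subseteq> I \<Longrightarrow>
      norm (\<Sum>i\<in>F. blinfun_apply (u i) (\<xi> i)) \<le> C * sqrt (\<Sum>i\<in>F. (norm (\<xi> i))\<^sup>2)"
    using assms unfolding bounded_row_def by blast
  show ?thesis
  proof (rule that[of "max C 0"])
    fix F and \<xi> :: "nat \<Rightarrow> 'a" assume "finite F" "F \<subseteq> I"
    moreover have "C * sqrt (\<Sum>i\<in>F. (norm (\<xi> i))\<^sup>2) \<le> max C 0 * sqrt (\<Sum>i\<in>F. (norm (\<xi> i))\<^sup>2)"
      by (intro mult_right_mono) (auto simp: sum_nonneg)
    ultimately show "norm (\<Sum>i\<in>F. blinfun_apply (u i) (\<xi> i)) \<le> max C 0 * sqrt (\<Sum>i\<in>F. (norm (\<xi> i))\<^sup>2)"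
      using C by (meson order.trans)
  qed simp
qed

lemma bounded_column_nonneg_bound:
  fixes v :: "nat \<Rightarrow> ('a::real_inner \<Rightarrow>\<^sub>L 'a)"
  assumes "bounded_column I v"
  obtains D where "D \<ge> 0"
    and "\<And>F (h :: 'a). finite F \<Longrightarrow> F \<subseteq> I \<Longrightarrow>
      (\<Sum>i\<in>F. (norm (blinfun_apply (v i) h))\<^sup>2) \<le> D * (norm h)\<^sup>2"
proof -
  obtain D where D: "\<And>F (h :: 'a). finite F \<Longrightarrow> F \<subseteq> I \<Longrightarrow>
      (\<Sum>i\<in>F. (norm (blinfun_apply (v i) h))\<^sup>2) \<le> D * (norm h)\<^sup>2"
    using assms unfolding bounded_column_def by blast
  show ?thesis
  proof (rule that[of "max D 0"])
    fix F and h :: 'a assume "finite F" "F \<subseteq> I"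
    moreover have "D * (norm h)\<^sup>2 \<le> max D 0 * (norm h)\<^sup>2"
      by (intro mult_right_mono) auto
    ultimately show "(\<Sum>i\<in>F. (norm (blinfun_apply (v i) h))\<^sup>2) \<le> max D 0 * (norm h)\<^sup>2"
      using D by (meson order.trans)
  qed simp
qed

lemma bounded_row_summable_on:
  fixes u :: "nat \<Rightarrow> ('a::{real_inner,complete_space} \<Rightarrow>\<^sub>L 'a)"
  assumes "bounded_row I u" and "(\<lambda>i. (norm (\<xi> i))\<^sup>2) summable_on I"
  shows "(\<lambda>i. blinfun_apply (u i) (\<xi> i)) summable_on I"
proof (rule summable_on_if_tails_small)
  fix e :: real assume "e > 0"
  obtain C where "C \<ge> 0" and C: "\<And>F \<xi>. finite F \<Longrightarrow> F \<subseteq> I \<Longrightarrow>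
      norm (\<Sum>i\<in>F. blinfun_apply (u i) (\<xi> i)) \<le> C * sqrt (\<Sum>i\<in>F. (norm (\<xi> i))\<^sup>2)"
    using bounded_row_nonneg_bound[OF assms(1)] by blast
  define d where "d = (e / (C + 1))\<^sup>2"
  have "d > 0"
    using \<open>e > 0\<close> \<open>C \<ge> 0\<close> by (simp add: d_def)
  obtain F0 where F0: "finite F0" "F0 \<subseteq> I"
    and tail: "\<And>G. finite G \<Longrightarrow> G \<subseteq> I - F0 \<Longrightarrow> (\<Sum>i\<in>G. (norm (\<xi> i))\<^sup>2) < d"
    by (rule nonneg_summable_on_tails_small[OF assms(2) _ \<open>d > 0\<close>]) simp_all
  have "norm (\<Sum>i\<in>G. blinfun_apply (u i) (\<xi> i)) < e" if G: "finite G" "G \<subseteq> I - F0" for G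
  proof -
    have "norm (\<Sum>i\<in>G. blinfun_apply (u i) (\<xi> i)) \<le> C * sqrt (\<Sum>i\<in>G. (norm (\<xi> i))\<^sup>2)"
      using C G by blast
    also have "\<dots> \<le> (C + 1) * sqrt (\<Sum>i\<in>G. (norm (\<xi> i))\<^sup>2)"
      by (intro mult_right_mono) (auto simp: sum_nonneg)
    also have "\<dots> < (C + 1) * sqrt d"
      using tail[OF G] \<open>C \<ge> 0\<close> by (intro mult_strict_left_mono real_sqrt_less_mono) auto
    also have "\<dots> = e"
      using \<open>C \<ge> 0\<close> \<open>e > 0\<close> by (simp add: d_def)
    finally show ?thesis .
  qed
  with F0 show "\<exists>F0. finite F0 \<and> F0 \<subseteq> I \<and> (\<forall>G. finite G \<longrightarrow> G \<subseteq> I - F0 \<longrightarrow>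
      norm (\<Sum>i\<in>G. blinfun_apply (u i) (\<xi> i)) < e)" by blast
qed

lemma bounded_row_column_alpha_has_sum:
  fixes u v :: "nat \<Rightarrow> ('a::{real_inner,complete_space} \<Rightarrow>\<^sub>L 'a)"
  assumes u: "bounded_row I u" and v: "bounded_column I v"
  shows "((\<lambda>i. blinfun_apply (u i) (blinfun_apply x (blinfun_apply (v i) h))) has_sum
           blinfun_apply (alpha I u v x) h) I"
proof -
  obtain C where "C \<ge> 0" and C: "\<And>F \<xi>. finite F \<Longrightarrow> F \<subseteq> I \<Longrightarrow>
      norm (\<Sum>i\<in>F. blinfun_apply (u i) (\<xi> i)) \<le> C * sqrt (\<Sum>i\<in>F. (norm (\<xi> i))\<^sup>2)"
    using bounded_row_nonneg_bound[OF u] by blast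
  obtain D where "D \<ge> 0" and D: "\<And>F h. finite F \<Longrightarrow> F \<subseteq> I \<Longrightarrow>
      (\<Sum>i\<in>F. (norm (blinfun_apply (v i) h))\<^sup>2) \<le> D * (norm h)\<^sup>2"
    using bounded_column_nonneg_bound[OF v] by blast
  define \<xi> where "\<xi> h i = blinfun_apply x (blinfun_apply (v i) h)" for h i
  define f where "f h = infsum (\<lambda>i. blinfun_apply (u i) (\<xi> h i)) I" for h
  have square_sums: "(\<Sum>i\<in>F. (norm (\<xi> h i))\<^sup>2) \<le> (norm x * sqrt D * norm h)\<^sup>2"
    if "finite F" "F \<subseteq> I" for F h
  proof -
    have "(\<Sum>i\<in>F. (norm (\<xi> h i))\<^sup>2) \<le> (\<Sum>i\<in>F. (norm x)\<^sup>2 * (norm (blinfun_apply (v i) h))\<^sup>2)"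
      unfolding \<xi>_def power_mult_distrib[symmetric]
      by (intro sum_mono power_mono norm_blinfun) auto
    also have "\<dots> \<le> (norm x)\<^sup>2 * (D * (norm h)\<^sup>2)"
      unfolding sum_distrib_left[symmetric] using D[OF that] by (intro mult_left_mono) auto
    finally show ?thesis
      using \<open>D \<ge> 0\<close> by (simp add: power_mult_distrib)
  qed
  have "(\<lambda>i. (norm (\<xi> h i))\<^sup>2) summable_on I" for h
    by (rule nonneg_bdd_above_summable_on) (use square_sums in \<open>auto simp: bdd_above_def\<close>)
  then have f: "((\<lambda>i. blinfun_apply (u i) (\<xi> h i)) has_sum f h) I" for h
    unfolding f_def by (intro has_sum_infsum bounded_row_summable_on[OF u])
  have "bounded_linear f"
  proof (rule bounded_linear_intro[where K = "C * norm x * sqrt D"])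
    fix a b
    show "f (a + b) = f a + f b"
      using f[of "a + b"] has_sum_add[OF f[of a] f[of b]]
      unfolding \<xi>_def blinfun.add_right by (rule has_sum_unique)
  next
    fix r a
    show "f (r *\<^sub>R a) = r *\<^sub>R f a"
      using f[of "r *\<^sub>R a"] has_sum_scaleR[OF f[of a], of r]
      unfolding \<xi>_def blinfun.scaleR_right by (rule has_sum_unique)
  next
    fix a
    have "norm (f a) \<le> C * (norm x * sqrt D * norm a)"
    proof (rule norm_has_sum_le_finite_sums[OF f])
      fix F assume F: "finite F" "F \<subseteq> I"
      have "norm (\<Sum>i\<in>F. blinfun_apply (u i) (\<xi> a i)) \<le> C * sqrt (\<Sum>i\<in>F. (norm (\<xi> a i))\<^sup>2)"
        using C[OF F] .
      also have "\<dots> \<le> C * (norm x * sqrt D * norm a)"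
        using square_sums[OF F, of a] \<open>C \<ge> 0\<close> \<open>D \<ge> 0\<close>
        by (intro mult_left_mono) (auto intro: real_le_lsqrt)
      finally show "norm (\<Sum>i\<in>F. blinfun_apply (u i) (\<xi> a i)) \<le> C * (norm x * sqrt D * norm a)" .
    qed
    then show "norm (f a) \<le> norm a * (C * norm x * sqrt D)"
      by (simp add: algebra_simps)
  qed
  then have "blinfun_apply (alpha I u v x) = f"
    unfolding alpha_def f_def \<xi>_def by (rule bounded_linear_Blinfun_apply)
  then show ?thesis
    using f by (simp add: \<xi>_def)
qed

context
  fixes I :: "nat set" and u v :: "nat \<Rightarrow> ('a::{real_inner,complete_space} \<Rightarrow>\<^sub>L 'a)"
    and x :: "'a \<Rightarrow>\<^sub>L 'a"
  assumes inv: "invertible_row I u v"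
begin

lemma invertible_row_has_sum: "((\<lambda>i. u i (v i h)) has_sum h) I"
  using inv by (simp add: invertible_row_def)

lemma invertible_row_column_apply_row:
  assumes "i \<in> I" "k \<in> I"
  shows "v i (u k h) = (if i = k then h else 0)"
proof -
  have "v i o\<^sub>L u k = (if i = k then id_blinfun else 0)"
    using inv assms by (simp add: invertible_row_def)
  from arg_cong[OF this, of "\<lambda>T. T h"] show ?thesis
    by (auto split: if_splits)
qed

lemma alpha_has_sum: "((\<lambda>i. u i (x (v i h))) has_sum alpha I u v x h) I"
  using inv by (intro bounded_row_column_alpha_has_sum) (auto simp: invertible_row_def)

lemma alpha_comp_row: "k \<in> I \<Longrightarrow> alpha I u v x o\<^sub>L u k = u k o\<^sub>L x"
proof (rule blinfun_eqI)
  fix h assume k: "k \<in> I"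
  have "((\<lambda>i. u i (x (v i (u k h)))) has_sum u k (x h)) I"
    by (rule has_sum_finite_neutralI[where B="{k}"]) (use k invertible_row_column_apply_row in auto)
  then show "(alpha I u v x o\<^sub>L u k) h = (u k o\<^sub>L x) h"
    unfolding blinfun_apply_blinfun_compose by (rule has_sum_unique[OF alpha_has_sum])
qed

lemma column_comp_alpha: "j \<in> I \<Longrightarrow> v j o\<^sub>L alpha I u v x = x o\<^sub>L v j"
proof (rule blinfun_eqI)
  fix h assume j: "j \<in> I"
  have "((\<lambda>i. v j (u i (x (v i h)))) has_sum v j (alpha I u v x h)) I"
    by (rule has_sum_bounded_linear[OF blinfun.bounded_linear_right alpha_has_sum])
  moreover have "((\<lambda>i. v j (u i (x (v i h)))) has_sum x (v j h)) I"
    by (rule has_sum_finite_neutralI[where B="{j}"]) (use j invertible_row_column_apply_row in auto)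
  ultimately show "(v j o\<^sub>L alpha I u v x) h = (x o\<^sub>L v j) h"
    unfolding blinfun_apply_blinfun_compose by (rule has_sum_unique)
qed

lemma blinfun_eq_if_column_comp_eq:
  assumes "\<And>j. j \<in> I \<Longrightarrow> v j o\<^sub>L A = v j o\<^sub>L B"
  shows "A = B"
proof (rule blinfun_eqI)
  fix h
  have "v i (A h) = v i (B h)" if "i \<in> I" for i
    using arg_cong[OF assms[OF that], of "\<lambda>T. T h"] by simp
  then have "((\<lambda>i. u i (v i (A h))) has_sum B h) I"
    using invertible_row_has_sum[of "B h"] by (simp cong: has_sum_cong)
  then show "A h = B h"
    by (rule has_sum_unique[OF invertible_row_has_sum])
qed

lemma alpha_commute_imp_compressions_commute:
  assumes commute: "alpha I u v x o\<^sub>L y = y o\<^sub>L alpha I u v x" and "j \<in> I" "k \<in> I"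
  shows "x o\<^sub>L (v j o\<^sub>L y o\<^sub>L u k) = (v j o\<^sub>L y o\<^sub>L u k) o\<^sub>L x"
proof (rule blinfun_eqI)
  fix h
  have "v j (alpha I u v x z) = x (v j z)" for z
    using arg_cong[OF column_comp_alpha[OF \<open>j \<in> I\<close>], of "\<lambda>T. T z"] by simp
  moreover have "alpha I u v x (y z) = y (alpha I u v x z)" for z
    using arg_cong[OF commute, of "\<lambda>T. T z"] by simp
  moreover have "alpha I u v x (u k z) = u k (x z)" for z
    using arg_cong[OF alpha_comp_row[OF \<open>k \<in> I\<close>], of "\<lambda>T. T z"] by simp
  ultimately show "(x o\<^sub>L (v j o\<^sub>L y o\<^sub>L u k)) h = ((v j o\<^sub>L y o\<^sub>L u k) o\<^sub>L x) h"
    by (metis blinfun_apply_blinfun_compose)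
qed

lemma compressions_commute_imp_alpha_commute:
  assumes commute: "\<forall>j\<in>I. \<forall>k\<in>I. x o\<^sub>L (v j o\<^sub>L y o\<^sub>L u k) = (v j o\<^sub>L y o\<^sub>L u k) o\<^sub>L x"
  shows "alpha I u v x o\<^sub>L y = y o\<^sub>L alpha I u v x"
proof (rule blinfun_eq_if_column_comp_eq, rule blinfun_eqI)
  fix j h assume "j \<in> I"
  have "((\<lambda>k. x (v j (y (u k (v k h))))) has_sum x (v j (y h))) I"
    by (intro has_sum_bounded_linear[OF blinfun.bounded_linear_right] invertible_row_has_sum)
  moreover have "x (v j (y (u k (v k h)))) = v j (y (u k (x (v k h))))" if "k \<in> I" for k
    using arg_cong[OF commute[rule_format, OF \<open>j \<in> I\<close> that], of "\<lambda>T. T (v k h)"] by simp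
  ultimately have "((\<lambda>k. v j (y (u k (x (v k h))))) has_sum x (v j (y h))) I"
    by (simp cong: has_sum_cong)
  moreover have "((\<lambda>k. v j (y (u k (x (v k h))))) has_sum v j (y (alpha I u v x h))) I"
    by (intro has_sum_bounded_linear[OF blinfun.bounded_linear_right] alpha_has_sum)
  ultimately have "x (v j (y h)) = v j (y (alpha I u v x h))"
    by (rule has_sum_unique)
  moreover have "v j (alpha I u v x (y h)) = x (v j (y h))"
    using arg_cong[OF column_comp_alpha[OF \<open>j \<in> I\<close>], of "\<lambda>T. T (y h)"] by simp
  ultimately show "(v j o\<^sub>L (alpha I u v x o\<^sub>L y)) h = (v j o\<^sub>L (y o\<^sub>L alpha I u v x)) h"
    by simp
qed

end

theorem proposition3p6:
  fixes J :: "'a::{real_inner,complete_space} \<Rightarrow>\<^sub>L 'a"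
    and n :: enat
    and u v :: "nat \<Rightarrow> ('a \<Rightarrow>\<^sub>L 'a)"
    and x y :: "'a \<Rightarrow>\<^sub>L 'a"
  assumes J: "complex_structure J"
    and n: "n \<ge> 1"
    and uB: "\<forall>i\<in>idx n. is_BH J (u i)"
    and vB: "\<forall>i\<in>idx n. is_BH J (v i)"
    and inv: "invertible_row (idx n) u v"
    and xB: "is_BH J x"
    and yB: "is_BH J y"
  shows "alpha (idx n) u v x o\<^sub>L y = y o\<^sub>L alpha (idx n) u v x \<longleftrightarrow>
    (\<forall>j\<in>idx n. \<forall>k\<in>idx n.
       x o\<^sub>L (v j o\<^sub>L y o\<^sub>L u k) = (v j o\<^sub>L y o\<^sub>L u k) o\<^sub>L x)"
  using alpha_commute_imp_compressions_commute[OF inv]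
    compressions_commute_imp_alpha_commute[OF inv] by blast

end
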